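(* For every base $b\ge 2$ there exist infinitely many $b$-wMRH numbers that are not $b$-MRH numbers.
   Context: Fix a base $b\ge 2$. $s_b(N)$ is the sum of the base-$b$ digits of $N$. For a positive integer $X$, its reversal $X^R$ is the integer whose base-$b$ representation is that of $X$ written in reverse order (leading zeros of the result are dropped). A positive integer $N$ is a $b$-wMRH number if there exists an integer $A\ge 0$ such that $N=(A+s_b(N))\cdot(A+s_b(N))^R$. A positive integer $N$ is a $b$-MRH number if there exists a positive integer $M$ such that $N=(M s_b(N))\cdot (M s_b(N))^R$. *)

theory Defs
  imports Main
begin

fun digits :: "nat \<Rightarrow> nat \<Rightarrow> nat list" where
  "digits b n = (if b < 2 \<or> n = 0 then [] else n mod b # digits b (n div b))"

declare digits.simps[simp del]

fun from_digits :: "nat \<Rightarrow> nat list \<Rightarrow> nat" where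
  "from_digits b [] = 0"
| "from_digits b (d # ds) = d + b * from_digits b ds"

definition digit_sum :: "nat \<Rightarrow> nat \<Rightarrow> nat" where
  "digit_sum b n = sum_list (digits b n)"

text \<open>Reversal: read the base-b digits of X in reverse order (leading zeros vanish).\<close>
definition reversal :: "nat \<Rightarrow> nat \<Rightarrow> nat" where
  "reversal b X = from_digits b (rev (digits b X))"

definition wMRH :: "nat \<Rightarrow> nat \<Rightarrow> bool" where
  "wMRH b N \<longleftrightarrow> N > 0 \<and>
     (\<exists>A::nat. N = (A + digit_sum b N) * reversal b (A + digit_sum b N))"

definition MRH :: "nat \<Rightarrow> nat \<Rightarrow> bool" where
  "MRH b N \<longleftrightarrow> N > 0 \<and>
     (\<exists>M::nat. M > 0 \<and> N = (M * digit_sum b N) * reversal b (M * digit_sum b N))"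

end

theory Submission
  imports Defs "HOL-Library.Infinite_Set"
begin

text \<open>Take \<open>X = b^k - 1\<close>, the palindrome of \<open>k\<close> digits \<open>b - 1\<close>, and \<open>N = X^2\<close>. The base-\<open>b\<close>
  digits of \<open>N = (b^k - 2) b^k + 1\<close> are \<open>1\<close>, then \<open>k - 1\<close> zeros, then \<open>b - 2\<close>, then \<open>k - 1\<close>
  digits \<open>b - 1\<close>, so \<open>s_b(N) = k(b - 1) \<le> X\<close> and \<open>N = X \<cdot> X^R\<close> is \<open>b\<close>-wMRH with
  \<open>A = X - s_b(N)\<close>. For an MRH number the digit sum divides \<open>N\<close>; but when \<open>b\<close> divides \<open>k\<close>
  it also divides \<open>s_b(N)\<close>, while \<open>N \<equiv> 1 (mod b)\<close>. Letting \<open>k\<close> run through the multiples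
  of \<open>b\<close> gives infinitely many such \<open>N\<close>.\<close>

lemma digit_sum_0 [simp]: "digit_sum b 0 = 0"
  unfolding digit_sum_def by (simp add: digits.simps)

lemma digit_sum_rec:
  assumes "b \<ge> 2"
  shows "digit_sum b n = n mod b + digit_sum b (n div b)"
  unfolding digit_sum_def using assms
  by (cases "n = 0") (simp_all add: digits.simps[of b n] digits.simps[of b 0])

lemma digit_sum_digit:
  assumes "b \<ge> 2" and "d < b"
  shows "digit_sum b d = d"
  using digit_sum_rec[OF assms(1), of d] assms(2) by simp

lemma digit_sum_le:
  assumes "b \<ge> 2"
  shows "digit_sum b n \<le> n"
proof (induction n rule: less_induct)
  case (less n)
  show ?case
  proof (cases "n = 0")
    case False
    then have "digit_sum b (n div b) \<le> n div b"
      using assms by (intro less.IH) simp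
    moreover have "n mod b + n div b \<le> n"
    proof -
      have "n div b \<le> n div b * b"
        using assms by simp
      then show ?thesis
        using div_mult_mod_eq[of n b] by linarith
    qed
    ultimately show ?thesis
      using digit_sum_rec[OF assms, of n] by linarith
  qed simp
qed

lemma digit_sum_mult_power_add:
  assumes "b \<ge> 2" and "r < b ^ k"
  shows "digit_sum b (q * b ^ k + r) = digit_sum b q + digit_sum b r"
  using assms(2)
proof (induction k arbitrary: r)
  case (Suc k)
  have split: "q * b ^ Suc k + r = r + (q * b ^ k) * b"
    by (simp add: algebra_simps)
  have mod_eq: "(q * b ^ Suc k + r) mod b = r mod b"
    unfolding split by (rule mod_mult_self1)
  have div_eq: "(q * b ^ Suc k + r) div b = q * b ^ k + r div b"
    unfolding split using assms(1) by simp
  have "r div b < b ^ k"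
    using Suc.prems assms(1) by (simp add: div_less_iff_less_mult mult.commute)
  then show ?case
    using Suc.IH digit_sum_rec[OF assms(1), of "q * b ^ Suc k + r"]
      digit_sum_rec[OF assms(1), of r] mod_eq div_eq by simp
qed simp

lemma from_digits_digits:
  assumes "b \<ge> 2"
  shows "from_digits b (digits b n) = n"
proof (induction n rule: less_induct)
  case (less n)
  show ?case
  proof (cases "n = 0")
    case True
    then show ?thesis by (simp add: digits.simps)
  next
    case False
    then have "from_digits b (digits b (n div b)) = n div b"
      using assms by (intro less.IH) simp
    then show ?thesis
      using False assms by (subst digits.simps) simp
  qed
qed

lemma power_minus_one_eq:
  assumes "(b::nat) \<ge> 1"
  shows "b ^ Suc k - 1 = (b ^ k - 1) * b + (b - 1)"
proof -
  have "b ^ k \<ge> 1"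
    using assms by simp
  then show ?thesis
    using assms by (simp add: algebra_simps diff_mult_distrib)
qed

lemma digits_mult_add:
  assumes "b \<ge> 2" and "d < b" and "q * b + d \<noteq> 0"
  shows "digits b (q * b + d) = d # digits b q"
  using assms by (subst digits.simps) simp

lemma digits_power_minus_one:
  assumes "b \<ge> 2"
  shows "digits b (b ^ k - 1) = replicate k (b - 1)"
proof (induction k)
  case 0
  then show ?case by (simp add: digits.simps)
next
  case (Suc k)
  have eq: "b ^ Suc k - 1 = (b ^ k - 1) * b + (b - 1)"
    using assms by (intro power_minus_one_eq) simp
  have "b ^ Suc k \<ge> b"
    using assms by simp
  then have "(b ^ k - 1) * b + (b - 1) \<noteq> 0"
    using assms eq by linarith
  with eq show ?case
    using Suc.IH digits_mult_add[OF assms, of "b - 1" "b ^ k - 1"] assms by simp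
qed

lemma digit_sum_power_minus_one:
  assumes "b \<ge> 2"
  shows "digit_sum b (b ^ k - 1) = k * (b - 1)"
  unfolding digit_sum_def digits_power_minus_one[OF assms] by (simp add: sum_list_replicate)

lemma reversal_power_minus_one:
  assumes "b \<ge> 2"
  shows "reversal b (b ^ k - 1) = b ^ k - 1"
  unfolding reversal_def
  using digits_power_minus_one[OF assms, of k] from_digits_digits[OF assms, of "b ^ k - 1"]
  by simp

lemma power_minus_one_squared:
  assumes "(x::nat) \<ge> 2"
  shows "(x - 1)\<^sup>2 = (x - 2) * x + 1"
proof -
  obtain y where "x = y + 2"
    using assms le_Suc_ex by (metis add.commute)
  then show ?thesis
    by (simp add: power2_eq_square algebra_simps)
qed

lemma digit_sum_power_minus_one_squared:
  assumes b: "b \<ge> 2" and k: "k \<ge> 1"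
  shows "digit_sum b ((b ^ k - 1)\<^sup>2) = k * (b - 1)"
proof -
  obtain j where j: "k = Suc j"
    using k by (cases k) auto
  have bk: "b ^ k \<ge> 2"
    using b k self_le_power[of b k] by simp
  have "b ^ k - 2 = (b ^ j - 1) * b + (b - 2)"
    using power_minus_one_eq[of b j] b j by simp
  then have "digit_sum b (b ^ k - 2) = j * (b - 1) + (b - 2)"
    using digit_sum_mult_power_add[OF b, of "b - 2" 1 "b ^ j - 1"]
      digit_sum_power_minus_one[OF b] digit_sum_digit[OF b, of "b - 2"] b by simp
  moreover have "digit_sum b ((b ^ k - 1)\<^sup>2) = digit_sum b (b ^ k - 2) + 1"
    unfolding power_minus_one_squared[OF bk]
    using digit_sum_mult_power_add[OF b, of 1 k "b ^ k - 2"] digit_sum_digit[OF b, of 1] bk b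
    by simp
  moreover obtain c where "b = c + 2"
    using b le_Suc_ex by (metis add.commute)
  ultimately show ?thesis
    using j by (simp add: algebra_simps)
qed

lemma power_minus_one_squared_mod:
  assumes "(b::nat) \<ge> 2" and "k \<ge> 1"
  shows "(b ^ k - 1)\<^sup>2 mod b = 1"
proof -
  obtain j where j: "k = Suc j"
    using assms(2) by (cases k) auto
  have "b ^ k \<ge> 2"
    using assms self_le_power[of b k] by simp
  then have "(b ^ k - 1)\<^sup>2 = 1 + ((b ^ k - 2) * b ^ j) * b"
    using power_minus_one_squared[of "b ^ k"] j by (simp add: algebra_simps)
  then have "(b ^ k - 1)\<^sup>2 mod b = 1 mod b"
    by (simp only: mod_mult_self1)
  then show ?thesis
    using assms(1) by simp
qed

lemma wMRH_mult_reversal: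
  assumes "N = X * reversal b X" and "N > 0" and "digit_sum b N \<le> X"
  shows "wMRH b N"
  unfolding wMRH_def
proof (intro conjI exI)
  show "N = (X - digit_sum b N + digit_sum b N) * reversal b (X - digit_sum b N + digit_sum b N)"
    using assms(1,3) by simp
qed (rule assms(2))

lemma MRH_digit_sum_dvd:
  assumes "MRH b N"
  shows "digit_sum b N dvd N"
proof -
  obtain M where eq: "N = M * digit_sum b N * reversal b (M * digit_sum b N)"
    using assms unfolding MRH_def by blast
  have "digit_sum b N dvd M * digit_sum b N * reversal b (M * digit_sum b N)"
    by simp
  from this[folded eq] show ?thesis .
qed

lemma wMRH_not_MRH_power_minus_one_squared:
  assumes b: "b \<ge> 2" and k: "k \<ge> 1" and "b dvd k"
  shows "wMRH b ((b ^ k - 1)\<^sup>2) \<and> \<not> MRH b ((b ^ k - 1)\<^sup>2)"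
proof
  let ?N = "(b ^ k - 1)\<^sup>2"
  have s: "digit_sum b ?N = k * (b - 1)"
    using digit_sum_power_minus_one_squared[OF b k] .
  have N_mod: "?N mod b = 1"
    using power_minus_one_squared_mod[OF b k] .
  have "?N = (b ^ k - 1) * reversal b (b ^ k - 1)"
    unfolding reversal_power_minus_one[OF b] power2_eq_square ..
  moreover have "?N > 0"
    using N_mod by (intro gr0I) auto
  ultimately show "wMRH b ?N"
    using s digit_sum_le[OF b, of "b ^ k - 1"] digit_sum_power_minus_one[OF b, of k]
    by (intro wMRH_mult_reversal) auto
  show "\<not> MRH b ?N"
  proof
    assume "MRH b ?N"
    moreover have "b dvd digit_sum b ?N"
      using s \<open>b dvd k\<close> by simp
    ultimately have "b dvd ?N"
      using MRH_digit_sum_dvd dvd_trans by blast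
    with N_mod b show False
      by simp
  qed
qed

theorem mainTheorem15:
  fixes b :: nat
  assumes "b \<ge> 2"
  shows "infinite {N::nat. wMRH b N \<and> \<not> MRH b N}"
  unfolding infinite_nat_iff_unbounded
proof
  fix n
  define k where "k = b * (n + 1)"
  have "1 * (n + 1) \<le> k"
    using assms unfolding k_def by (intro mult_le_mono1) simp
  then have k: "k \<ge> 1" "b dvd k" "n < k"
    unfolding k_def by auto
  have "k * 1 \<le> k * (b - 1)"
    using assms by (intro mult_le_mono2) simp
  also have "k * (b - 1) \<le> b ^ k - 1"
    using digit_sum_le[OF assms] digit_sum_power_minus_one[OF assms] by metis
  also have "\<dots> \<le> (b ^ k - 1)\<^sup>2"
    unfolding power2_eq_square by (rule le_square)
  finally show "\<exists>N > n. N \<in> {N. wMRH b N \<and> \<not> MRH b N}"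
    using k wMRH_not_MRH_power_minus_one_squared[OF assms k(1,2)]
    by (intro exI[of _ "(b ^ k - 1)\<^sup>2"]) simp
qed

end
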